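(* For all non-negative integers $\beta$ and $k$, let $$X := \{(\alpha, l) \in \mathbb{Z}^2 : 0 \leq \alpha \leq \beta,\ 0 \leq l \leq k,\ (\alpha,l) \neq (\beta, k),\ (q-1) \mid (\beta + k -(\alpha + l)) \}.$$ Then $z(\chi_t^0, x, 0) = 1$, and $$z(\chi_t^\beta,x,-k) = 1 - x^{-1} \sum_{(\alpha,l) \in X}{\beta \choose \alpha}{k \choose l}t^\alpha \theta^l\, z(\chi_t^\alpha, x, -l).$$
   Context: Let $q$ be a power of a prime $p$, $A=\mathbb{F}_q[\theta]$ with $\theta$ an indeterminate, and for $d\ge 0$ let $A_+(d)$ be the set of monic polynomials in $A$ of degree $d$. Let $t$ be an indeterminate and $\chi_t:A\to\mathbb{F}_q[t]$ the $\mathbb{F}_q$-algebra morphism sending $\theta$ to $t$ (so $\chi_t(a)=a(t)$); $\chi_t(a)^0:=1$. For non-negative integers $\beta,k,d$ put $S_d(\chi_t^\beta,k):=\sum_{a\in A_+(d)}\chi_t(a)^\beta a^k\in A[t]$, and define the special series $z(\chi_t^\beta,x,-k):=\sum_{d\ge 0}x^{-d}S_d(\chi_t^\beta,k)\in A[t][[x^{-1}]]$. *)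

theory Defs
  imports "HOL-Computational_Algebra.Computational_Algebra"
begin

text \<open>F_q is a finite field type 'a (q = CARD('a)); A = F_q[theta] is 'a poly
(variable theta); A[t] is 'a poly poly (outer variable t, coefficients in A).\<close>

definition monic_deg :: "nat \<Rightarrow> ('a::{field,finite}) poly set" where
  "monic_deg d = {a. degree a = d \<and> lead_coeff a = 1}"

text \<open>chi_t(a) = a(t): replace theta by t, landing in F_q[t] inside A[t].\<close>
definition chi_t :: "('a::field) poly \<Rightarrow> 'a poly poly" where
  "chi_t a = map_poly (\<lambda>c. [:c:]) a"

definition tvar :: "('a::field) poly poly" where "tvar = [:0, 1:]"
definition theta :: "('a::field) poly poly" where "theta = [:[:0, 1:]:]"

definition S_d :: "nat \<Rightarrow> nat \<Rightarrow> nat \<Rightarrow> ('a::{field,finite}) poly poly" where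
  "S_d d \<beta> k = (\<Sum>a\<in>monic_deg d. chi_t a ^ \<beta> * [:a ^ k:])"

text \<open>z(chi_t^beta, x, -k) as a formal power series in the variable x^{-1}
(fps_X plays the role of x^{-1}).\<close>
definition zser :: "nat \<Rightarrow> nat \<Rightarrow> ('a::{field,finite}) poly poly fps" where
  "zser \<beta> k = Abs_fps (\<lambda>d. S_d d \<beta> k)"

definition Xset :: "nat \<Rightarrow> nat \<Rightarrow> nat \<Rightarrow> (nat \<times> nat) set" where
  "Xset q \<beta> k = {(\<alpha>, l). \<alpha> \<le> \<beta> \<and> l \<le> k \<and> (\<alpha>, l) \<noteq> (\<beta>, k) \<and>
       (q - 1) dvd (\<beta> + k - (\<alpha> + l))}"

end

theory Submission imports Defs begin

text \<open>Write a monic polynomial of degree \<open>d + 1\<close> as \<open>a = \<theta> b + c\<close> with \<open>b\<close> monic of degree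
  \<open>d\<close> and \<open>c \<in> F\<^sub>q\<close>; then \<open>\<chi>\<^sub>t(a) = t \<chi>\<^sub>t(b) + c\<close>. Expanding \<open>\<chi>\<^sub>t(a)\<^sup>\<beta> a\<^sup>k\<close> binomially, the
  term indexed by \<open>(\<alpha>, l)\<close> depends on \<open>c\<close> only through \<open>c\<^sup>m\<close> with \<open>m = \<beta> + k - (\<alpha> + l)\<close>, so
  summing over \<open>c\<close> produces the power sum \<open>\<Sum>\<^sub>c c\<^sup>m\<close>. This is \<open>q = 0\<close> for \<open>m = 0\<close>, and for
  \<open>m > 0\<close> it is \<open>-1\<close> if \<open>q - 1\<close> divides \<open>m\<close> and \<open>0\<close> otherwise; so exactly the pairs in \<open>X\<close>
  survive, with coefficient \<open>-1\<close>. This gives the recursion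
  \<open>S\<^sub>d\<^sub>+\<^sub>1(\<beta>, k) = - \<Sum>\<^sub>X (\<beta> choose \<alpha>) (k choose l) t\<^sup>\<alpha> \<theta>\<^sup>l S\<^sub>d(\<alpha>, l)\<close>, which together with
  \<open>S\<^sub>0 = 1\<close> is the series identity read coefficientwise.\<close>

lemma of_nat_card_UNIV_eq_0: "of_nat (card (UNIV :: 'a::{ring_1,finite} set)) = (0::'a)"
proof -
  have "(\<Sum>c\<in>UNIV. (c::'a) + 1) = (\<Sum>c\<in>UNIV. c)"
    by (rule sum.reindex_bij_witness[of _ "\<lambda>c. c - 1" "\<lambda>c. c + 1"]) auto
  then show ?thesis by (simp add: sum.distrib)
qed

lemma card_UNIV_field_ge_2: "2 \<le> card (UNIV :: 'a::{field,finite} set)"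
proof -
  have "card {0::'a, 1} \<le> card (UNIV :: 'a set)" by (intro card_mono) auto
  then show ?thesis by simp
qed

lemma card_nonzero_field: "card {x::'a::{field,finite}. x \<noteq> 0} = card (UNIV :: 'a set) - 1"
proof -
  have "{x::'a. x \<noteq> 0} = UNIV - {0}" by auto
  then show ?thesis by (simp add: card_Diff_singleton)
qed

lemma power_card_minus_1_eq_1:
  fixes c :: "'a::{field,finite}"
  assumes "c \<noteq> 0"
  shows "c ^ (card (UNIV :: 'a set) - 1) = 1"
proof -
  let ?N = "{x::'a. x \<noteq> 0}"
  have "(\<Prod>x\<in>?N. c * x) = (\<Prod>x\<in>?N. x)"
    by (rule prod.reindex_bij_witness[of _ "\<lambda>x. x / c" "\<lambda>x. c * x"]) (use assms in auto)
  then have "c ^ card ?N * (\<Prod>x\<in>?N. x) = (\<Prod>x\<in>?N. x)" by (simp add: prod.distrib)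
  moreover have "(\<Prod>x\<in>?N. x) \<noteq> 0" by simp
  ultimately show ?thesis by (simp add: card_nonzero_field)
qed

lemma exists_power_neq_1:
  assumes "\<not> (card (UNIV :: 'a::{field,finite} set) - 1) dvd m"
  shows "\<exists>g::'a. g \<noteq> 0 \<and> g ^ m \<noteq> 1"
proof (rule ccontr)
  assume all_roots: "\<not> ?thesis"
  define q where "q = card (UNIV :: 'a set) - 1"
  define r where "r = m mod q"
  define p :: "'a poly" where "p = monom 1 r + [:-1:]"
  have "0 < r" "r < q"
    using assms card_UNIV_field_ge_2[where 'a='a]
    by (simp_all add: r_def q_def mod_greater_zero_iff_not_dvd)
  have deg_p: "degree p = r"
    using \<open>0 < r\<close> by (simp add: p_def degree_add_eq_left degree_monom_eq)
  have "poly p x = 0" if "x \<noteq> 0" for x :: 'a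
  proof -
    have "1 = x ^ m" using all_roots that by auto
    also have "\<dots> = (x ^ q) ^ (m div q) * x ^ r"
      by (simp add: r_def power_mult[symmetric] power_add[symmetric])
    also have "\<dots> = x ^ r" using power_card_minus_1_eq_1[OF that] by (simp add: q_def)
    finally show ?thesis by (simp add: p_def poly_monom)
  qed
  then have "card {x::'a. x \<noteq> 0} \<le> card {x. poly p x = 0}"
    by (intro card_mono) auto
  also have "\<dots> \<le> r"
    using card_poly_roots_bound[of p] deg_p \<open>0 < r\<close> by fastforce
  finally show False using \<open>r < q\<close> by (simp add: card_nonzero_field q_def)
qed

lemma sum_UNIV_power:
  assumes "0 < m"
  shows "(\<Sum>c\<in>UNIV. (c::'a::{field,finite}) ^ m) =
    (if (card (UNIV :: 'a set) - 1) dvd m then -1 else 0)"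
proof (cases "(card (UNIV :: 'a set) - 1) dvd m")
  case True
  then obtain s where m: "m = (card (UNIV :: 'a set) - 1) * s" by blast
  have "(\<Sum>c\<in>UNIV. (c::'a) ^ m) = (\<Sum>c\<in>UNIV - {0}. c ^ m)"
    using assms by (subst sum.remove[of _ 0]) auto
  also have "\<dots> = (\<Sum>c\<in>UNIV - {0::'a}. 1)"
    by (intro sum.cong refl) (simp add: m power_mult power_card_minus_1_eq_1[simplified])
  also have "\<dots> = of_nat (card (UNIV :: 'a set)) - 1"
    using card_UNIV_field_ge_2[where 'a='a] by (simp add: card_Diff_singleton of_nat_diff)
  finally show ?thesis using True by (simp add: of_nat_card_UNIV_eq_0)
next
  case False
  then obtain g :: 'a where g: "g \<noteq> 0" "g ^ m \<noteq> 1" using exists_power_neq_1 by blast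
  have "(\<Sum>c\<in>UNIV. (g * c) ^ m) = (\<Sum>c\<in>UNIV. (c::'a) ^ m)"
    by (rule sum.reindex_bij_witness[of _ "\<lambda>x. x / g" "\<lambda>x. g * x"]) (use g in auto)
  then have "g ^ m * (\<Sum>c\<in>UNIV. (c::'a) ^ m) = (\<Sum>c\<in>UNIV. c ^ m)"
    by (simp add: power_mult_distrib sum_distrib_left)
  then have "(g ^ m - 1) * (\<Sum>c\<in>UNIV. (c::'a) ^ m) = 0"
    by (simp add: algebra_simps)
  then show ?thesis using g False by simp
qed

lemma sum_UNIV_power_Xset:
  assumes "\<alpha> \<le> \<beta>" "l \<le> k"
  shows "(\<Sum>c\<in>UNIV. (c::'a::{field,finite}) ^ (\<beta> + k - (\<alpha> + l))) =
    (if (\<alpha>, l) \<in> Xset (card (UNIV :: 'a set)) \<beta> k then -1 else 0)"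
proof (cases "(\<alpha>, l) = (\<beta>, k)")
  case True
  then show ?thesis by (simp add: Xset_def of_nat_card_UNIV_eq_0)
next
  case False
  then have "0 < \<beta> + k - (\<alpha> + l)" using assms by auto
  then show ?thesis using False assms by (simp add: sum_UNIV_power Xset_def)
qed

lemma monic_deg_0: "monic_deg 0 = {1 :: 'a::{field,finite} poly}"
  by (auto simp: monic_deg_def elim!: degree_eq_zeroE)

lemma monic_deg_Suc:
  "monic_deg (Suc d) = (\<lambda>(b, c). pCons c b) ` (monic_deg d \<times> (UNIV :: 'a::{field,finite} set))"
proof (intro equalityI subsetI)
  fix a :: "'a poly"
  assume a: "a \<in> monic_deg (Suc d)"
  obtain c b where ab: "a = pCons c b" by (cases a) auto
  with a have "b \<noteq> 0" by (auto simp: monic_deg_def)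
  with a ab have "b \<in> monic_deg d" by (auto simp: monic_deg_def)
  with ab show "a \<in> (\<lambda>(b, c). pCons c b) ` (monic_deg d \<times> UNIV)" by auto
next
  fix a :: "'a poly"
  assume "a \<in> (\<lambda>(b, c). pCons c b) ` (monic_deg d \<times> UNIV)"
  then obtain b c where "a = pCons c b" "b \<in> monic_deg d" by auto
  moreover from \<open>b \<in> monic_deg d\<close> have "b \<noteq> 0" by (auto simp: monic_deg_def)
  ultimately show "a \<in> monic_deg (Suc d)" by (auto simp: monic_deg_def)
qed

lemma chi_t_pCons: "chi_t (pCons c b) = tvar * chi_t b + [:[:c:]:]"
  by (simp add: chi_t_def map_poly_pCons tvar_def)

lemma const_poly_pCons: "[:pCons c b:] = theta * [:b:] + [:[:c:]:]"
  by (simp add: theta_def)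

lemma binomial_expansion_pCons:
  fixes b :: "'a::field poly"
  shows "chi_t (pCons c b) ^ \<beta> * [:pCons c b ^ k:] =
    (\<Sum>(\<alpha>, l)\<in>{..\<beta>} \<times> {..k}.
       (of_nat (\<beta> choose \<alpha>) * of_nat (k choose l) * tvar ^ \<alpha> * theta ^ l)
       * (chi_t b ^ \<alpha> * [:b ^ l:]) * [:[:c ^ (\<beta> + k - (\<alpha> + l)):]:])"
proof -
  let ?C = "[:[:c:]:]"
  have "chi_t (pCons c b) ^ \<beta> * [:pCons c b ^ k:] =
      (tvar * chi_t b + ?C) ^ \<beta> * (theta * [:b:] + ?C) ^ k"
    \<comment> \<open>instantiated, since as a rewrite rule \<open>const_poly_pCons\<close> also applies to \<open>[:[:c:]:]\<close>\<close>
    by (simp only: poly_const_pow[symmetric] chi_t_pCons const_poly_pCons[of c b])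
  also have "\<dots> = (\<Sum>\<alpha>\<le>\<beta>. \<Sum>l\<le>k.
      (of_nat (\<beta> choose \<alpha>) * (tvar * chi_t b) ^ \<alpha> * ?C ^ (\<beta> - \<alpha>)) *
      (of_nat (k choose l) * (theta * [:b:]) ^ l * ?C ^ (k - l)))"
    by (simp only: binomial_ring sum_product)
  also have "\<dots> = (\<Sum>(\<alpha>, l)\<in>{..\<beta>} \<times> {..k}.
       (of_nat (\<beta> choose \<alpha>) * of_nat (k choose l) * tvar ^ \<alpha> * theta ^ l)
       * (chi_t b ^ \<alpha> * [:b ^ l:]) * ?C ^ (\<beta> + k - (\<alpha> + l)))"
    unfolding sum.cartesian_product
  proof (intro sum.cong refl, clarify, goal_cases)
    case (1 \<alpha> l)
    then have exponent: "\<beta> + k - (\<alpha> + l) = (\<beta> - \<alpha>) + (k - l)" by auto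
    show ?case
      unfolding exponent power_add power_mult_distrib poly_const_pow[symmetric] by (simp add: ac_simps)
  qed
  finally show ?thesis by (simp only: poly_const_pow)
qed

lemma S_d_0: "S_d 0 \<beta> k = (1 :: 'a::{field,finite} poly poly)"
  by (simp add: S_d_def monic_deg_0 chi_t_def one_pCons[symmetric])

lemma S_d_Suc_expansion:
  "(S_d (Suc d) \<beta> k :: 'a::{field,finite} poly poly) =
    (\<Sum>(\<alpha>, l)\<in>{..\<beta>} \<times> {..k}.
       (of_nat (\<beta> choose \<alpha>) * of_nat (k choose l) * tvar ^ \<alpha> * theta ^ l) * S_d d \<alpha> l
       * [:[:\<Sum>c\<in>UNIV. (c::'a) ^ (\<beta> + k - (\<alpha> + l)):]:])"
proof -
  have "S_d (Suc d) \<beta> k =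
      (\<Sum>b\<in>monic_deg d. \<Sum>c\<in>UNIV. chi_t (pCons c b) ^ \<beta> * [:pCons c b ^ k:] :: 'a poly poly)"
    unfolding S_d_def monic_deg_Suc
    by (subst sum.reindex) (auto simp: inj_on_def sum.cartesian_product case_prod_unfold)
  also have "\<dots> = (\<Sum>b\<in>monic_deg d. \<Sum>c\<in>UNIV. \<Sum>(\<alpha>, l)\<in>{..\<beta>} \<times> {..k}.
       (of_nat (\<beta> choose \<alpha>) * of_nat (k choose l) * tvar ^ \<alpha> * theta ^ l)
       * (chi_t b ^ \<alpha> * [:b ^ l:]) * [:[:c ^ (\<beta> + k - (\<alpha> + l)):]:])"
    by (simp only: binomial_expansion_pCons)
  also have "\<dots> = (\<Sum>(\<alpha>, l)\<in>{..\<beta>} \<times> {..k}. \<Sum>b\<in>monic_deg d. \<Sum>c\<in>UNIV.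
       (of_nat (\<beta> choose \<alpha>) * of_nat (k choose l) * tvar ^ \<alpha> * theta ^ l)
       * (chi_t b ^ \<alpha> * [:b ^ l:]) * [:[:c ^ (\<beta> + k - (\<alpha> + l)):]:])"
    by (subst sum.swap[where A = UNIV], subst sum.swap) (simp only: case_prod_unfold)
  also have "\<dots> = (\<Sum>(\<alpha>, l)\<in>{..\<beta>} \<times> {..k}.
       (of_nat (\<beta> choose \<alpha>) * of_nat (k choose l) * tvar ^ \<alpha> * theta ^ l) * S_d d \<alpha> l
       * [:[:\<Sum>c\<in>UNIV. (c::'a) ^ (\<beta> + k - (\<alpha> + l)):]:])"
    unfolding S_d_def
    by (simp only: sum_to_poly[symmetric] mult.assoc,
        simp only: sum_product, simp only: sum_distrib_left mult.assoc)
  finally show ?thesis .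
qed

lemma S_d_Suc:
  "(S_d (Suc d) \<beta> k :: 'a::{field,finite} poly poly) =
   - (\<Sum>(\<alpha>, l)\<in>Xset (card (UNIV :: 'a set)) \<beta> k.
         (of_nat (\<beta> choose \<alpha>) * of_nat (k choose l) * tvar ^ \<alpha> * theta ^ l) * S_d d \<alpha> l)"
proof -
  let ?X = "Xset (card (UNIV :: 'a set)) \<beta> k"
  let ?h = "\<lambda>\<alpha> l. (of_nat (\<beta> choose \<alpha>) * of_nat (k choose l) * tvar ^ \<alpha> * theta ^ l)
    * (S_d d \<alpha> l :: 'a poly poly)"
  have "(S_d (Suc d) \<beta> k :: 'a poly poly) =
      (\<Sum>(\<alpha>, l)\<in>{..\<beta>} \<times> {..k}. if (\<alpha>, l) \<in> ?X then - ?h \<alpha> l else 0)"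
    unfolding S_d_Suc_expansion
  proof (rule sum.cong[OF refl], clarify, goal_cases)
    case (1 \<alpha> l)
    then have coeff: "[:[:\<Sum>c\<in>UNIV. (c::'a) ^ (\<beta> + k - (\<alpha> + l)):]:] =
        (if (\<alpha>, l) \<in> ?X then -1 else 0)"
      by (simp add: sum_UNIV_power_Xset flip: pCons_one)
    show ?case unfolding coeff by simp
  qed
  also have "\<dots> = (\<Sum>(\<alpha>, l)\<in>?X. - ?h \<alpha> l)"
    by (rule sum.mono_neutral_cong_right) (auto simp: Xset_def split: if_split_asm)
  finally show ?thesis by (simp add: sum_negf case_prod_unfold)
qed

lemma zser_eq_1_minus_X_mult:
  "(zser \<beta> k :: 'a::{field,finite} poly poly fps) = 1 - fps_X *
    (\<Sum>(\<alpha>, l)\<in>Xset (card (UNIV :: 'a set)) \<beta> k.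
       fps_const (of_nat (\<beta> choose \<alpha>) * of_nat (k choose l) * tvar ^ \<alpha> * theta ^ l) * zser \<alpha> l)"
  (is "?lhs = ?rhs")
proof (rule fps_ext)
  fix n
  show "?lhs $ n = ?rhs $ n"
    by (cases n) (simp_all add: zser_def S_d_0 S_d_Suc fps_sum_nth case_prod_unfold)
qed

theorem proposition2p0p1:
  fixes \<beta> k :: nat
  shows "zser 0 0 = (1 :: ('a::{field,finite}) poly poly fps) \<and>
    (zser \<beta> k :: 'a poly poly fps) = 1 - fps_X *
      (\<Sum>(\<alpha>, l)\<in>Xset (card (UNIV :: 'a set)) \<beta> k.
         fps_const (of_nat (\<beta> choose \<alpha>) * of_nat (k choose l) * tvar ^ \<alpha> * theta ^ l)
         * zser \<alpha> l)"
proof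
  have "Xset q 0 0 = {}" for q by (auto simp: Xset_def)
  then show "zser 0 0 = (1 :: 'a poly poly fps)"
    using zser_eq_1_minus_X_mult[of 0 0] by simp
qed (rule zser_eq_1_minus_X_mult)

end
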